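(* Let $n\ge\ell\ge1$ and consider the saturation SQGT model with $s=\ell$ thresholds $\underline{\eta}=(1,\dots,\ell)$ (outcome of $y$ is $\min(y,\ell)$). Let $k=\lceil\log_{\ell+1}(n-\ell+1)\rceil$. Let $w_0$ be the infinite sequence $0^{\ell}\,(1^{\ell+1}0^{\ell+1})(1^{\ell+1}0^{\ell+1})\cdots$ and, for $1\le j\le k-1$, let $w_j=p(c_j)p(c_j)\cdots$ be the infinite periodic sequence of the word $p(c_j)$, where $c_j=\frac{(\ell+1)^j-1}{\ell}$ and $$p(c)=o(0)^{c}\,0\,o(1)^{c}\cdots0\,o(\ell)^{c}\;1\,u(\ell)^{c}\;1\,u(\ell-1)^{c}\cdots1\,u(0)^{c}\;0,$$ with $o(x)=0^{\ell-x}1^x$, $u(x)=1^x0^{\ell-x}$. Let $\mathbf{M}$ be the $k\times n$ binary matrix whose rows are the first $n$ entries of $w_{k-1},\dots,w_1,w_0$. Then $\mathbf{M}$ solves $\mathrm{Burst}(n,\ell,\underline{\eta})$: for all distinct $i,j\in\{0,\dots,n-\ell\}$, $\min(\mathbf{M}\mathbf{b}_i,\ell)\neq\min(\mathbf{M}\mathbf{b}_j,\ell)$ (entrywise minimum). In particular $\mathrm{Burst}(n,\ell,\underline{\eta})$ can be solved with $\lceil\log_{\ell+1}(n-\ell+1)\rceil$ measurements.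
   Context: Items are indexed $0,\dots,n-1$; $\mathbf{b}_i\in\{0,1\}^n$ is the burst of length $\ell$ with head $i$ (coordinates $i,\dots,i+\ell-1$ equal to $1$, others $0$). $w^c$ denotes the concatenation of $c$ copies of the word $w$. A matrix solves $\mathrm{Burst}(n,\ell,\underline{\eta})$ if distinct length-$\ell$ bursts yield distinct outcome vectors. *)

theory Defs
  imports Complex_Main
begin

(* binary words are lists of naturals with entries in {0,1} *)
definition ow :: "nat \<Rightarrow> nat \<Rightarrow> nat list" where
  "ow l x = replicate (l - x) 0 @ replicate x 1"

definition uw :: "nat \<Rightarrow> nat \<Rightarrow> nat list" where
  "uw l x = replicate x 1 @ replicate (l - x) 0"

definition pow_word :: "nat list \<Rightarrow> nat \<Rightarrow> nat list" where
  "pow_word w c = concat (replicate c w)"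

definition pword :: "nat \<Rightarrow> nat \<Rightarrow> nat list" where
  "pword l c =
     concat (map (\<lambda>x. (if x = 0 then [] else [0]) @ pow_word (ow l x) c) [0..<l+1])
     @ concat (map (\<lambda>x. [1] @ pow_word (uw l x) c) (rev [0..<l+1]))
     @ [0]"

definition cj :: "nat \<Rightarrow> nat \<Rightarrow> nat" where
  "cj l j = ((l + 1) ^ j - 1) div l"

definition w0 :: "nat \<Rightarrow> nat \<Rightarrow> nat" where
  "w0 l i = (if i < l then 0 else if (i - l) mod (2 * (l + 1)) < l + 1 then 1 else 0)"

definition wseq :: "nat \<Rightarrow> nat \<Rightarrow> nat \<Rightarrow> nat" where
  "wseq l j i = (if j = 0 then w0 l i
                 else (let p = pword l (cj l j) in p ! (i mod length p)))"

definition num_meas :: "nat \<Rightarrow> nat \<Rightarrow> nat" where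
  "num_meas n l = nat \<lceil>log (real (l + 1)) (real (n - l + 1))\<rceil>"

(* k x n matrix: row r (0-based) is the first n entries of w_{k-1-r} *)
definition Mmat :: "nat \<Rightarrow> nat \<Rightarrow> nat \<Rightarrow> nat \<Rightarrow> nat" where
  "Mmat n l r x = wseq l (num_meas n l - 1 - r) x"

definition burst :: "nat \<Rightarrow> nat \<Rightarrow> nat \<Rightarrow> nat" where
  "burst l i x = (if i \<le> x \<and> x < i + l then 1 else 0)"

definition outcome :: "nat \<Rightarrow> nat \<Rightarrow> nat \<Rightarrow> nat list" where
  "outcome n l i = map (\<lambda>r. min (\<Sum>x<n. Mmat n l r x * burst l i x) l) [0..<num_meas n l]"

end

theory Submission
  imports Defs
begin

text \<open>Let \<open>P = (l+1)^j = l c\<^sub>j + 1\<close>. The word \<open>p(c\<^sub>j)\<close> splits into \<open>2(l+1)\<close> segments of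
length \<open>P\<close>; the \<open>Q\<close>-th is the \<open>Q\<close>-th block repeated and cut to length \<open>P\<close>, and that block is
the cyclic window of length \<open>l\<close> at \<open>Q\<close> in the period \<open>0^l 1^(l+1) 0\<close> of \<open>w\<^sub>0\<close>.
So position \<open>x\<close> of \<open>w\<^sub>j\<close> (also for \<open>j = 0\<close>, \<open>P = 1\<close>) reads that period at
\<open>\<lfloor>x/P\<rfloor> + (x mod P) mod l\<close>, and the \<open>l\<close> positions of a burst at \<open>i\<close> sum to the number of
ones in the window at \<open>\<lfloor>i/P\<rfloor>\<close>: the \<open>j\<close>-th digit of the reflected \<open>(l+1)\<close>-ary Gray code
of \<open>i\<close>, which never exceeds \<open>l\<close>, so saturation loses nothing. The outcome vector is
therefore the \<open>k\<close>-digit Gray code of \<open>i\<close>, which is injective on \<open>i < (l+1)^k\<close>, and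
\<open>n - l + 1 \<le> (l+1)^k\<close>.\<close>

lemma length_pow_word [simp]: "length (pow_word w c) = c * length w"
  by (induction c) (auto simp: pow_word_def)

lemma nth_pow_word: "s < c * length w \<Longrightarrow> pow_word w c ! s = w ! (s mod length w)"
proof (induction c arbitrary: s)
  case (Suc c)
  have unfold: "pow_word w (Suc c) = w @ pow_word w c"
    by (simp add: pow_word_def)
  show ?case
  proof (cases "s < length w")
    case False
    with Suc.prems Suc.IH[of "s - length w"] show ?thesis
      by (simp add: unfold nth_append le_mod_geq)
  qed (simp add: unfold nth_append)
qed simp

lemma nth_pow_word_snoc_hd:
  assumes "w \<noteq> []" and "s \<le> c * length w"
  shows "(pow_word w c @ [w ! 0]) ! s = w ! (s mod length w)"
proof (cases "s < c * length w")
  case True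
  then show ?thesis by (simp add: nth_append nth_pow_word)
next
  case False
  with assms(2) have "s = c * length w" by simp
  then show ?thesis by (simp add: nth_append)
qed

lemma length_concat_map_const:
  "(\<And>q. q < m \<Longrightarrow> length (f q) = P) \<Longrightarrow> length (concat (map f [0..<m])) = m * P"
  by (induction m) auto

lemma nth_concat_map_const:
  assumes "\<And>q. q < m \<Longrightarrow> length (f q) = P" and "t < m * P"
  shows "concat (map f [0..<m]) ! t = f (t div P) ! (t mod P)"
  using assms
proof (induction m arbitrary: t)
  case (Suc m)
  have len: "length (concat (map f [0..<m])) = m * P"
    using Suc.prems(1) by (intro length_concat_map_const) simp
  show ?case
  proof (cases "t < m * P")
    case True
    with Suc show ?thesis by (simp add: nth_append len)
  next
    case False
    with Suc.prems(2) have "t div P = m"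
      by (intro div_nat_eqI) (auto simp: mult.commute)
    moreover from this have "t mod P = t - m * P"
      by (simp add: minus_div_mult_eq_mod [symmetric])
    ultimately show ?thesis using False by (simp add: nth_append len)
  qed
qed simp

lemma concat_map_rebracket:
  "concat (map (\<lambda>x. s x @ g x) [0..<m]) @ s m = s 0 @ concat (map (\<lambda>x. g x @ s (Suc x)) [0..<m])"
  by (induction m) auto

definition block :: "nat \<Rightarrow> nat \<Rightarrow> nat list" where
  "block l Q = (if Q \<le> l then ow l Q else uw l (2*l + 1 - Q))"

definition pattern_bit :: "nat \<Rightarrow> nat \<Rightarrow> nat" where
  "pattern_bit l z = (if l \<le> z \<and> z \<le> 2*l then 1 else 0)"

lemma length_block [simp]: "length (block l Q) = l"
  by (simp add: block_def ow_def uw_def)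

lemma nth_block:
  assumes "Q < 2*(l+1)" and "d < l"
  shows "block l Q ! d = pattern_bit l ((Q + d) mod (2*(l+1)))"
proof (cases "Q + d < 2*(l+1)")
  case True
  with assms show ?thesis
    by (auto simp: block_def ow_def uw_def pattern_bit_def nth_append)
next
  case False
  with assms have "(Q + d) mod (2*(l+1)) = Q + d - 2*(l+1)"
    by (simp add: le_mod_geq)
  with False assms show ?thesis
    by (auto simp: block_def uw_def pattern_bit_def nth_append)
qed

text \<open>Every separator letter of \<open>p(c)\<close> equals the first letter of the block before it.\<close>

lemma pword_eq_concat_blocks:
  assumes "1 \<le> l"
  shows "pword l c = concat (map (\<lambda>Q. pow_word (block l Q) c @ [block l Q ! 0]) [0..<2*(l+1)])"
proof -
  define g where "g Q = pow_word (block l Q) c" for Q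
  define s where "s x = (if x = 0 then [] else [pattern_bit l (x - 1)])" for x
  have rise: "map (\<lambda>x. (if x = 0 then [] else [0]) @ pow_word (ow l x) c) [0..<l+1]
      = map (\<lambda>x. s x @ g x) [0..<l+1]"
    by (auto simp: s_def g_def block_def pattern_bit_def)
  have fall: "map (\<lambda>x. [1] @ pow_word (uw l x) c) (rev [0..<l+1])
      = map (\<lambda>x. s x @ g x) [l+1..<2*(l+1)]"
    by (rule nth_equalityI)
      (auto simp: rev_nth s_def g_def block_def pattern_bit_def simp del: upt_Suc)
  have halves: "[0..<l+1] @ [l+1..<2*(l+1)] = [0..<2*(l+1)]"
    using upt_add_eq_append[of 0 "l+1" "l+1"] by (simp add: mult_2)
  have "pword l c = concat (map (\<lambda>x. s x @ g x) ([0..<l+1] @ [l+1..<2*(l+1)])) @ [0]"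
    unfolding pword_def rise fall map_append concat_append by (rule append_assoc [symmetric])
  also have "\<dots> = concat (map (\<lambda>x. s x @ g x) [0..<2*(l+1)]) @ s (2*(l+1))"
    by (simp only: halves) (simp add: s_def pattern_bit_def)
  also have "\<dots> = concat (map (\<lambda>x. g x @ s (Suc x)) [0..<2*(l+1)])"
    unfolding concat_map_rebracket by (simp add: s_def)
  also have "\<dots> = concat (map (\<lambda>Q. g Q @ [block l Q ! 0]) [0..<2*(l+1)])"
    using assms by (intro arg_cong[where f = concat] map_cong) (auto simp: s_def nth_block)
  finally show ?thesis by (simp add: g_def)
qed

lemma length_pword: "1 \<le> l \<Longrightarrow> length (pword l c) = 2*(l+1) * (l*c + 1)"
  by (simp add: pword_eq_concat_blocks length_concat_map_const mult.commute)

lemma nth_pword: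
  assumes "1 \<le> l" and "t < 2*(l+1) * (l*c + 1)"
  shows "pword l c ! t = block l (t div (l*c + 1)) ! (t mod (l*c + 1) mod l)"
proof -
  define Q where "Q = t div (l*c + 1)"
  have "pword l c ! t = (pow_word (block l Q) c @ [block l Q ! 0]) ! (t mod (l*c + 1))"
    unfolding pword_eq_concat_blocks [OF assms(1)] Q_def
    by (rule nth_concat_map_const) (use assms(2) in \<open>simp_all add: mult.commute\<close>)
  also have "\<dots> = block l Q ! (t mod (l*c + 1) mod l)"
    using assms(1) by (subst nth_pow_word_snoc_hd)
      (auto simp: mult.commute less_Suc_eq_le [symmetric] simp flip: length_0_conv)
  finally show ?thesis
    by (simp add: Q_def)
qed

lemma cj_closed_form: "1 \<le> l \<Longrightarrow> l * cj l j + 1 = (l+1)^j"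
proof -
  assume "1 \<le> l"
  have "(l+1)^j mod l = 1 ^ j mod l"
    by (metis mod_add_self1 power_mod)
  then have "l dvd (l+1)^j - 1"
    by (simp add: mod_eq_dvd_iff_nat [symmetric])
  then show ?thesis
    by (simp add: cj_def)
qed

lemma w0_eq_pattern_bit: "w0 l x = pattern_bit l (x mod (2*(l+1)))"
proof (cases "x < l")
  case False
  define y where "y = (x - l) mod (2*(l+1))"
  have y_less: "y < 2*(l+1)"
    by (simp add: y_def)
  have "x mod (2*(l+1)) = (y + l) mod (2*(l+1))"
    using False by (simp add: y_def mod_add_left_eq)
  also have "\<dots> = (if y + l < 2*(l+1) then y + l else y + l - 2*(l+1))"
    using y_less by (simp add: le_mod_geq)
  finally have "x mod (2*(l+1)) = \<dots>" .
  moreover have "w0 l x = (if y < l + 1 then 1 else 0)"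
    using False by (simp add: w0_def y_def)
  ultimately show ?thesis
    using y_less by (auto simp: pattern_bit_def)
qed (simp add: w0_def pattern_bit_def)

lemma wseq_eq_pattern_bit:
  assumes "1 \<le> l"
  shows "wseq l j x = pattern_bit l ((x div (l+1)^j + x mod (l+1)^j mod l) mod (2*(l+1)))"
proof (cases "j = 0")
  case False
  define P where "P = (l+1)^j"
  define t where "t = x mod (2*(l+1) * P)"
  have P: "l * cj l j + 1 = P"
    using cj_closed_form [OF assms] by (simp add: P_def)
  have t: "t = P * (x div P mod (2*(l+1))) + x mod P"
    unfolding t_def by (metis mod_mult2_eq mult.commute)
  have len: "length (pword l (cj l j)) = 2*(l+1) * P"
    unfolding length_pword [OF assms] P ..
  have "wseq l j x = pword l (cj l j) ! t"
    using False by (simp add: wseq_def len t_def)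
  also have "\<dots> = block l (t div P) ! (t mod P mod l)"
    using nth_pword [OF assms, of t "cj l j"] unfolding P by (simp add: t_def P_def)
  also have "\<dots> = block l (x div P mod (2*(l+1))) ! (x mod P mod l)"
    by (simp add: t P_def)
  also have "\<dots> = pattern_bit l ((x div P + x mod P mod l) mod (2*(l+1)))"
    using assms by (simp add: nth_block mod_add_left_eq)
  finally show ?thesis
    by (simp add: P_def)
qed (simp add: wseq_def w0_eq_pattern_bit)

lemma div_mod_window_shift:
  fixes i k l c :: nat
  assumes P: "P = l*c + 1" and "k < l"
  shows "(i+k) div P + (i+k) mod P mod l = i div P + (i mod P + k) mod l"
proof -
  define r where "r = i mod P"
  have "0 < P" and "r < P"
    using P by (simp_all add: r_def)
  have i: "i + k = (r + k) + i div P * P"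
    by (simp add: r_def)
  have div: "(i+k) div P = (r + k) div P + i div P" and mod: "(i+k) mod P = (r + k) mod P"
    unfolding i using \<open>0 < P\<close> by simp_all
  consider "r + k < P" | "c = 0" | "c \<noteq> 0" "P \<le> r + k"
    by linarith
  then show ?thesis
  proof cases
    case 1
    then show ?thesis
      by (simp add: div mod r_def)
  next
    case 2
    then show ?thesis
      using P \<open>k < l\<close> by simp
  next
    case 3
    (* the window crosses one segment boundary; as P = 1 (mod l), the offset mod l still advances by k *)
    have "l * 1 \<le> l * c"
      using 3 by (intro mult_le_mono2) simp
    then have "l < P"
      using P by linarith
    then have "(r + k) div P = 1" and "(r + k) mod P = r + k - P"
      using 3 \<open>r < P\<close> \<open>k < l\<close> by (simp_all add: div_if mod_if)
    moreover have "r + k = (r + k - P + 1) + c * l" and "r + k - P + 1 < l"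
      using 3 \<open>r < P\<close> \<open>k < l\<close> P by simp_all
    then have "(r + k) mod l = r + k - P + 1"
      by (metis mod_mult_self1 mod_less)
    ultimately show ?thesis
      using \<open>r + k - P + 1 < l\<close> by (simp add: div mod r_def)
  qed
qed

lemma sum_lessThan_rotate_mod:
  fixes g :: "nat \<Rightarrow> 'a::cancel_comm_monoid_add"
  assumes "0 < l"
  shows "(\<Sum>k<l. g ((r + k) mod l)) = (\<Sum>k<l. g k)"
proof (induction r)
  case (Suc r)
  define h where "h k = g ((r + k) mod l)" for k
  have "(\<Sum>k<l. h (Suc k)) + h 0 = (\<Sum>k<l. h k) + h l"
    by (metis add.commute sum.lessThan_Suc sum.lessThan_Suc_shift)
  moreover have "h l = h 0"
    by (simp add: h_def)
  ultimately have "(\<Sum>k<l. h (Suc k)) = (\<Sum>k<l. h k)"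
    by simp
  with Suc.IH show ?case
    by (simp add: h_def)
qed (use assms in simp)

definition gray_digit :: "nat \<Rightarrow> nat \<Rightarrow> nat" where
  "gray_digit l a = (if even (a div (l+1)) then a mod (l+1) else l - a mod (l+1))"

lemma gray_digit_le: "gray_digit l a \<le> l"
  using mod_less_divisor [of "l+1" a] by (simp add: gray_digit_def)

lemma gray_digit_mod_period:
  "gray_digit l a = (let z = a mod (2*(l+1)) in if z \<le> l then z else 2*l + 1 - z)"
proof -
  have "a mod (2*(l+1)) = (l+1) * (a div (l+1) mod 2) + a mod (l+1)"
    by (metis mod_mult2_eq mult.commute)
  moreover have "a mod (l+1) \<le> l"
    by (simp add: less_Suc_eq_le [symmetric])
  ultimately show ?thesis
    by (cases "even (a div (l+1))") (auto simp: gray_digit_def Let_def odd_iff_mod_2_eq_one)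
qed

lemma sum_pattern_bit_window: "(\<Sum>k<l. pattern_bit l ((a + k) mod (2*(l+1)))) = gray_digit l a"
proof -
  define z where "z = a mod (2*(l+1))"
  have z: "z < 2*(l+1)"
    by (simp add: z_def)
  have gray: "gray_digit l a = (if z \<le> l then z else 2*l + 1 - z)"
    by (simp add: gray_digit_mod_period Let_def z_def)
  have bit: "pattern_bit l ((a + k) mod (2*(l+1))) = (if l \<le> z + k \<and> z + k \<le> 2*l then 1 else 0)"
    if "k < l" for k
  proof -
    have "(a + k) mod (2*(l+1)) = (z + k) mod (2*(l+1))"
      by (simp add: z_def mod_add_left_eq)
    also have "\<dots> = (if z + k < 2*(l+1) then z + k else z + k - 2*(l+1))"
      using z \<open>k < l\<close> by (simp add: le_mod_geq)
    finally show ?thesis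
      using z \<open>k < l\<close> by (auto simp: pattern_bit_def)
  qed
  have "(\<Sum>k<l. pattern_bit l ((a + k) mod (2*(l+1))))
      = (\<Sum>k<l. if l \<le> z + k \<and> z + k \<le> 2*l then 1 else 0)"
    by (rule sum.cong) (simp_all only: lessThan_iff bit)
  also have "\<dots> = card {k\<in>{..<l}. l \<le> z + k \<and> z + k \<le> 2*l}"
    by (simp add: sum.inter_filter [symmetric])
  also have "\<dots> = gray_digit l a"
  proof (cases "z \<le> l")
    case True
    then have "{k\<in>{..<l}. l \<le> z + k \<and> z + k \<le> 2*l} = {l - z..<l}"
      by auto
    with True show ?thesis
      by (simp add: gray)
  next
    case False
    with z have "{k\<in>{..<l}. l \<le> z + k \<and> z + k \<le> 2*l} = {..<2*l + 1 - z}"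
      by auto
    with False show ?thesis
      by (simp add: gray)
  qed
  finally show ?thesis .
qed

lemma sum_window_wseq:
  assumes "1 \<le> l"
  shows "(\<Sum>k<l. wseq l j (i + k)) = gray_digit l (i div (l+1)^j)"
proof -
  define P where "P = (l+1)^j"
  have P: "P = l * cj l j + 1"
    using cj_closed_form [OF assms] by (simp add: P_def)
  have "(\<Sum>k<l. wseq l j (i + k)) = (\<Sum>k<l. pattern_bit l ((i div P + (i mod P + k) mod l) mod (2*(l+1))))"
    by (intro sum.cong refl)
      (simp only: lessThan_iff wseq_eq_pattern_bit [OF assms] P_def [symmetric] div_mod_window_shift [OF P])
  also have "\<dots> = (\<Sum>k<l. pattern_bit l ((i div P + k) mod (2*(l+1))))"
    using assms by (intro sum_lessThan_rotate_mod) simp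
  also have "\<dots> = gray_digit l (i div P)"
    by (rule sum_pattern_bit_window)
  finally show ?thesis
    by (simp add: P_def)
qed

lemma gray_digit_eq_imp_eq:
  assumes "gray_digit l a = gray_digit l b" and "a div (l+1) = b div (l+1)"
  shows "a = b"
proof -
  have "a mod (l+1) < l+1" and "b mod (l+1) < l+1"
    by simp_all
  moreover have "a mod (l+1) = b mod (l+1) \<or> l - a mod (l+1) = l - b mod (l+1)"
    using assms by (auto simp: gray_digit_def split: if_splits)
  ultimately have "a mod (l+1) = b mod (l+1)"
    by linarith
  with assms(2) show ?thesis
    by (metis mult_div_mod_eq)
qed

lemma gray_digits_inj:
  assumes "\<forall>j<K. gray_digit l (a div (l+1)^j) = gray_digit l (b div (l+1)^j)"
    and "a < (l+1)^K" and "b < (l+1)^K"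
  shows "a = b"
  using assms
proof (induction K arbitrary: a b)
  case (Suc K)
  have "\<forall>j<K. gray_digit l (a div (l+1) div (l+1)^j) = gray_digit l (b div (l+1) div (l+1)^j)"
  proof (intro allI impI)
    fix j
    assume "j < K"
    then have "Suc j < Suc K"
      by simp
    with Suc.prems(1) have "gray_digit l (a div (l+1)^Suc j) = gray_digit l (b div (l+1)^Suc j)"
      by blast
    then show "gray_digit l (a div (l+1) div (l+1)^j) = gray_digit l (b div (l+1) div (l+1)^j)"
      by (simp only: power_Suc div_mult2_eq)
  qed
  moreover have "a div (l+1) < (l+1)^K" and "b div (l+1) < (l+1)^K"
    using Suc.prems(2,3) by (simp_all only: power_Suc2 less_mult_imp_div_less)
  ultimately have "a div (l+1) = b div (l+1)"
    by (rule Suc.IH)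
  moreover have "gray_digit l a = gray_digit l b"
    using Suc.prems(1) by (metis div_by_1 power_0 zero_less_Suc)
  ultimately show ?case
    by (rule gray_digit_eq_imp_eq [rotated])
qed simp

lemma sum_times_burst:
  assumes "i + l \<le> n"
  shows "(\<Sum>x<n. f x * burst l i x) = (\<Sum>k<l. f (i + k))"
proof -
  have "(\<Sum>x<n. f x * burst l i x) = (\<Sum>x\<in>{..<n}. if x \<in> {i..<i+l} then f x else 0)"
    by (intro sum.cong) (auto simp: burst_def)
  also have "\<dots> = sum f ({..<n} \<inter> {i..<i+l})"
    by (simp add: sum.inter_restrict)
  also have "{..<n} \<inter> {i..<i+l} = {i..<i+l}"
    using assms by auto
  also have "sum f {i..<i+l} = (\<Sum>k<l. f (i + k))"
    by (simp add: sum.shift_bounds_nat_ivl [of f 0 i l, symmetric] lessThan_atLeast0 add.commute)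
  finally show ?thesis .
qed

lemma le_power_num_meas:
  assumes "1 \<le> l"
  shows "n - l + 1 \<le> (l+1) ^ num_meas n l"
proof -
  define L where "L = log (real (l+1)) (real (n - l + 1))"
  have base: "1 < real (l+1)"
    using assms by simp
  then have "0 \<le> L"
    by (simp add: L_def)
  then have "real (num_meas n l) = of_int \<lceil>L\<rceil>"
    by (simp add: num_meas_def L_def)
  then have "L \<le> real (num_meas n l)"
    by linarith
  have "real (n - l + 1) = real (l+1) powr L"
    using base by (simp add: L_def)
  also have "\<dots> \<le> real (l+1) powr real (num_meas n l)"
    using base \<open>L \<le> real (num_meas n l)\<close> by simp
  also have "\<dots> = real ((l+1) ^ num_meas n l)"
    using base by (simp add: powr_realpow)
  finally show ?thesis
    by linarith
qed

lemma nth_outcome: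
  assumes "1 \<le> l" and "i + l \<le> n" and "r < num_meas n l"
  shows "outcome n l i ! r = gray_digit l (i div (l+1) ^ (num_meas n l - 1 - r))"
proof -
  have "outcome n l i ! r = min (\<Sum>k<l. wseq l (num_meas n l - 1 - r) (i + k)) l"
    using assms(2,3) by (simp add: outcome_def sum_times_burst Mmat_def)
  then show ?thesis
    by (simp add: sum_window_wseq [OF assms(1)] gray_digit_le min_absorb1)
qed

theorem mainTheorem4:
  fixes n l :: nat
  assumes "1 \<le> l" and "l \<le> n"
  shows "\<forall>i\<le>n - l. \<forall>j\<le>n - l. i \<noteq> j \<longrightarrow> outcome n l i \<noteq> outcome n l j"
proof (intro allI impI notI)
  fix i j
  assume i: "i \<le> n - l" and j: "j \<le> n - l" and "i \<noteq> j" and eq: "outcome n l i = outcome n l j"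
  let ?K = "num_meas n l"
  have "\<forall>d<?K. gray_digit l (i div (l+1)^d) = gray_digit l (j div (l+1)^d)"
  proof (intro allI impI)
    fix d
    assume "d < ?K"
    then have row: "?K - 1 - d < ?K" and "?K - 1 - (?K - 1 - d) = d"
      by simp_all
    then show "gray_digit l (i div (l+1)^d) = gray_digit l (j div (l+1)^d)"
      using nth_outcome [OF assms(1) _ row, of i] nth_outcome [OF assms(1) _ row, of j] i j assms(2) eq
      by simp
  qed
  moreover have "i < (l+1)^?K" and "j < (l+1)^?K"
    using le_power_num_meas [OF assms(1), of n] i j by linarith+
  ultimately have "i = j"
    by (rule gray_digits_inj)
  with \<open>i \<noteq> j\<close> show False ..
qed

end
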